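(* Let $K\ge1$, let $\boldsymbol{\lambda}=(\lambda_1,\dots,\lambda_K)$ with $\lambda_k\ge1$ for all $k$, and let $\beta>0$. For $\boldsymbol{\alpha}=e+\boldsymbol{\lambda}$ with $e\in\mathbb{R}^K_{\ge0}$ (the network output/evidence), put $S=\sum_k\alpha_k$, $\hat p_k=\alpha_k/S$, and for $y$ in the label space $\mathcal{Y}=\{y\in\mathbb{R}^K: y_i\in[0,1],\ \sum_i y_i=1\}$ define $$\mathcal{L}_{VI\text{-}EDL}(\boldsymbol{\alpha},y)=\sum_{k=1}^K(y_k-\hat p_k)^2+\sum_{k=1}^K\frac{\hat p_k(1-\hat p_k)}{S+1}+\beta\Big[\log\Gamma(S)-\sum_{k=1}^K\log\Gamma(\alpha_k)+\sum_{k=1}^K(\alpha_k-\lambda_k)\big(\psi(\alpha_k)-\psi(S)\big)\Big].$$ Then $\mathcal{L}_{VI\text{-}EDL}$ is globally Lipschitz continuous with respect to the network output, with Lipschitz constant $L_h$ (a uniform bound on the absolute values of the partial derivatives $|\partial\mathcal{L}_{VI\text{-}EDL}/\partial\alpha_i|$) satisfying $$L_h\le 2+\frac{1}{(K+1)^2}+\frac{2}{K(K+1)}+\beta\Big(2+\frac{1}{\min_j\lambda_j}+\frac{1}{\|\boldsymbol{\lambda}\|_1}\Big).$$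
   Context: $\Gamma$ is the Gamma function, $\psi$ the digamma function, and $\|\boldsymbol{\lambda}\|_1=\sum_k\lambda_k$. *)

theory Defs
  imports "HOL-Analysis.Analysis"
begin

text \<open>Label space: probability vectors indexed by the finite type 'k (K = CARD('k)).\<close>
definition label_space :: "('k::finite \<Rightarrow> real) set" where
  "label_space = {y. (\<forall>i. 0 \<le> y i \<and> y i \<le> 1) \<and> (\<Sum>i\<in>UNIV. y i) = 1}"

definition vi_edl :: "('k::finite \<Rightarrow> real) \<Rightarrow> real \<Rightarrow> ('k \<Rightarrow> real) \<Rightarrow> ('k \<Rightarrow> real) \<Rightarrow> real" where
  "vi_edl lam beta alpha y =
     (let S = (\<Sum>k\<in>UNIV. alpha k); p = (\<lambda>k. alpha k / S) in
       (\<Sum>k\<in>UNIV. (y k - p k)^2)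
     + (\<Sum>k\<in>UNIV. p k * (1 - p k) / (S + 1))
     + beta * (ln (Gamma S) - (\<Sum>k\<in>UNIV. ln (Gamma (alpha k)))
               + (\<Sum>k\<in>UNIV. (alpha k - lam k) * (Digamma (alpha k) - Digamma S))))"

end

theory Submission
  imports Defs "HOL-Real_Asymp.Real_Asymp"
begin

text \<open>
  Write S = sum_k alpha_k and p = alpha / S. The squared-error and variance terms equal
  C - 2 Y / S + Q / S^2 + (1 - Q / S^2) / (S + 1) with C = sum_k y_k^2, Y = sum_k y_k alpha_k and
  Q = sum_k alpha_k^2, and the beta-bracket equals sum_k g_(lam_k)(alpha_k) - g_(|lam|_1)(S) for
  g_c(x) = (x - c) psi(x) - log Gamma(x), whose derivative is (x - c) psi'(x).

  The partial derivative of the squared error in alpha_i is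
  (2 / S) (sum_k y_k p_k + p_i - sum_k p_k^2 - y_i). Since p and y put mass 1 - p_i and 1 - y_i
  outside i, the bracket is at most 2 (1 - p_i) in absolute value, and 2 (1 - p_i) <= S because
  alpha_i >= 1. The variance term contributes at most 2 / (S (S + 1)) + 1 / (S + 1)^2, where S >= K.
  As psi'(x) <= 2 / x for x >= 1, both (alpha_i - lam_i) psi'(alpha_i) and (S - |lam|_1) psi'(S)
  lie in [0, 2], so the beta-term contributes at most 2 beta. Changing one coordinate at a time and
  applying the mean value theorem gives the Lipschitz bound in the l1-norm.
\<close>

lemma Polygamma_1_real_pos: "x > 0 \<Longrightarrow> Polygamma 1 (x::real) > 0"
  by (rule Polygamma_real_odd_pos) (auto elim!: nonpos_Ints_cases)

lemma Polygamma_1_real_le: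
  fixes x :: real
  assumes x: "x \<ge> 1"
  shows "Polygamma 1 x \<le> 2 / x"
proof -
  have series: "(\<lambda>k. inverse ((x + real k)^2)) sums Polygamma 1 x"
    using Polygamma_LIMSEQ[of x 1] x by (simp add: power2_eq_square)
  have "(\<lambda>k. 2 / (x + real k)) \<longlonglongrightarrow> 0"
    by real_asymp
  then have telescope: "(\<lambda>k. 2 / (x + real k) - 2 / (x + real (Suc k))) sums (2 / x)"
    using telescope_sums' by fastforce
  have "inverse ((x + real k)^2) \<le> 2 / (x + real k) - 2 / (x + real (Suc k))" for k
  proof -
    define u where "u = x + real k"
    have "1 \<le> u"
      using x by (simp add: u_def)
    then have "u * (u + 1) \<le> 2 * u^2"
      by (simp add: power2_eq_square)
    moreover have "2 / u - 2 / (u + 1) = 2 / (u * (u + 1))"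
      using \<open>1 \<le> u\<close> by (simp add: field_simps)
    ultimately have "inverse (u^2) \<le> 2 / u - 2 / (u + 1)"
      using \<open>1 \<le> u\<close> by (simp add: inverse_eq_divide divide_simps)
    then show ?thesis
      by (simp add: u_def algebra_simps)
  qed
  then show ?thesis
    using sums_le[OF _ series telescope] by blast
qed

definition kl_component :: "real \<Rightarrow> real \<Rightarrow> real" where
  "kl_component c x = (x - c) * Digamma x - ln (Gamma x)"

lemma has_real_derivative_kl_component:
  fixes x :: real
  assumes "x > 0"
  shows "(kl_component c has_real_derivative (x - c) * Polygamma 1 x) (at x)"
proof -
  have "x \<notin> \<int>\<^sub>\<le>\<^sub>0"
    using assms by (auto elim!: nonpos_Ints_cases)
  then have "((\<lambda>x. (x - c) * Digamma x - ln_Gamma x) has_real_derivative (x - c) * Polygamma 1 x)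
      (at x)"
    using assms by (auto intro!: derivative_eq_intros)
  then show ?thesis
    by (rule has_field_derivative_transform_within_open[where S = "{0<..}"])
       (use assms in \<open>auto simp: kl_component_def ln_Gamma_real_pos\<close>)
qed

lemma kl_component_derivative_bounds:
  fixes x c :: real
  assumes "1 \<le> x" "0 \<le> c" "c \<le> x"
  shows "0 \<le> (x - c) * Polygamma 1 x" "(x - c) * Polygamma 1 x \<le> 2"
proof -
  have pos: "Polygamma 1 x > 0"
    using assms by (intro Polygamma_1_real_pos) auto
  then show "0 \<le> (x - c) * Polygamma 1 x"
    using assms by simp
  have "(x - c) * Polygamma 1 x \<le> x * Polygamma 1 x"
    using pos assms by (intro mult_right_mono) auto
  also have "\<dots> \<le> x * (2 / x)"
    using Polygamma_1_real_le assms by (intro mult_left_mono) auto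
  finally show "(x - c) * Polygamma 1 x \<le> 2"
    using assms by simp
qed

lemma sum_fun_upd_UNIV:
  fixes a :: "'k::finite \<Rightarrow> 'a" and g :: "'k \<Rightarrow> 'a \<Rightarrow> 'b::comm_monoid_add"
  shows "(\<Sum>k\<in>UNIV. g k ((a(i := t)) k)) = g i t + (\<Sum>k\<in>UNIV - {i}. g k (a k))"
  by (subst sum.remove[of UNIV i]) (auto intro!: sum.cong)

lemma vi_edl_eq:
  fixes alpha lam y :: "'k::finite \<Rightarrow> real"
  defines "S \<equiv> \<Sum>k\<in>UNIV. alpha k"
  assumes S: "S \<noteq> 0"
  shows "vi_edl lam beta alpha y =
      (\<Sum>k\<in>UNIV. (y k)^2) - 2 * (\<Sum>k\<in>UNIV. y k * alpha k) / S + (\<Sum>k\<in>UNIV. (alpha k)^2) / S^2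
    + (1 - (\<Sum>k\<in>UNIV. (alpha k)^2) / S^2) / (S + 1)
    + beta * ((\<Sum>k\<in>UNIV. kl_component (lam k) (alpha k)) - kl_component (\<Sum>k\<in>UNIV. lam k) S)"
proof -
  have square_error: "(\<Sum>k\<in>UNIV. (y k - alpha k / S)^2)
      = (\<Sum>k\<in>UNIV. (y k)^2) - 2 * (\<Sum>k\<in>UNIV. y k * alpha k) / S + (\<Sum>k\<in>UNIV. (alpha k)^2) / S^2"
    by (simp add: power2_diff power_divide sum.distrib sum_subtractf sum_divide_distrib[symmetric]
        sum_distrib_left mult.assoc)
  have variance: "(\<Sum>k\<in>UNIV. alpha k / S * (1 - alpha k / S) / (S + 1))
      = (1 - (\<Sum>k\<in>UNIV. (alpha k)^2) / S^2) / (S + 1)"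
  proof -
    have "(\<Sum>k\<in>UNIV. alpha k / S * (1 - alpha k / S) / (S + 1))
        = ((\<Sum>k\<in>UNIV. alpha k) / S - (\<Sum>k\<in>UNIV. (alpha k)^2) / S^2) / (S + 1)"
      by (simp add: right_diff_distrib power2_eq_square sum_subtractf sum_divide_distrib[symmetric])
    then show ?thesis
      using S by (simp add: S_def)
  qed
  have "(\<Sum>k\<in>UNIV. (alpha k - lam k) * (Digamma (alpha k) - Digamma S))
      = (\<Sum>k\<in>UNIV. (alpha k - lam k) * Digamma (alpha k)) - (\<Sum>k\<in>UNIV. (alpha k - lam k) * Digamma S)"
    by (simp add: right_diff_distrib sum_subtractf)
  also have "(\<Sum>k\<in>UNIV. (alpha k - lam k) * Digamma S) = (S - (\<Sum>k\<in>UNIV. lam k)) * Digamma S"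
    by (simp add: S_def sum_subtractf flip: sum_distrib_right)
  finally have kl: "ln (Gamma S) - (\<Sum>k\<in>UNIV. ln (Gamma (alpha k)))
        + (\<Sum>k\<in>UNIV. (alpha k - lam k) * (Digamma (alpha k) - Digamma S))
      = (\<Sum>k\<in>UNIV. kl_component (lam k) (alpha k)) - kl_component (\<Sum>k\<in>UNIV. lam k) S"
    by (simp add: kl_component_def sum_subtractf)
  show ?thesis
    unfolding vi_edl_def Let_def S_def[symmetric] square_error variance kl by simp
qed

lemma vi_edl_fun_upd_eq:
  fixes alpha lam y :: "'k::finite \<Rightarrow> real" and i :: 'k
  assumes nonneg: "\<And>k. 0 \<le> alpha k" and "0 < t"
  defines "S0 \<equiv> \<Sum>k\<in>UNIV - {i}. alpha k" and "Y0 \<equiv> \<Sum>k\<in>UNIV - {i}. y k * alpha k"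
    and "Q0 \<equiv> \<Sum>k\<in>UNIV - {i}. (alpha k)^2" and "R0 \<equiv> \<Sum>k\<in>UNIV - {i}. kl_component (lam k) (alpha k)"
  shows "vi_edl lam beta (alpha(i := t)) y =
      (\<Sum>k\<in>UNIV. (y k)^2) + (- 2 * (y i * t + Y0) / (t + S0) + (t^2 + Q0) / (t + S0)^2
      + (1 - (t^2 + Q0) / (t + S0)^2) / (t + S0 + 1))
      + beta * (kl_component (lam i) t + R0 - kl_component (\<Sum>k\<in>UNIV. lam k) (t + S0))"
proof -
  have "0 < t + S0"
    using \<open>0 < t\<close> nonneg by (simp add: S0_def add_pos_nonneg sum_nonneg)
  then show ?thesis
    using vi_edl_eq[of "alpha(i := t)" lam beta y]
      sum_fun_upd_UNIV[of "\<lambda>k x. x" alpha i t] sum_fun_upd_UNIV[of "\<lambda>k x. y k * x" alpha i t]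
      sum_fun_upd_UNIV[of "\<lambda>k x. x^2" alpha i t]
      sum_fun_upd_UNIV[of "\<lambda>k. kl_component (lam k)" alpha i t]
    by (simp add: S0_def Y0_def Q0_def R0_def minus_divide_left)
qed

lemma has_real_derivative_mse_term:
  fixes a S0 Y0 Q0 c :: real
  assumes pos: "0 < a + S0"
  defines "S \<equiv> a + S0" and "Y \<equiv> c * a + Y0" and "Q \<equiv> a^2 + Q0"
  shows "((\<lambda>t. - 2 * (c * t + Y0) / (t + S0) + (t^2 + Q0) / (t + S0)^2
      + (1 - (t^2 + Q0) / (t + S0)^2) / (t + S0 + 1)) has_real_derivative
      2 / S * (Y / S + a / S - Q / S^2 - c)
      + (2 * (Q / S^2 - a / S) / (S * (S + 1)) - (1 - Q / S^2) / (S + 1)^2)) (at a)"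
proof -
  have nz: "a + S0 \<noteq> 0" "a + S0 + 1 \<noteq> 0" "(a + S0)^2 \<noteq> 0"
    using pos by auto
  show ?thesis
    apply (rule derivative_eq_intros refl nz)+
    unfolding S_def Y_def Q_def using nz
    apply (simp add: power2_eq_square power3_eq_cube)
    apply (simp add: divide_simps)
    apply algebra
    done
qed

definition vi_edl_partial ::
    "('k::finite \<Rightarrow> real) \<Rightarrow> real \<Rightarrow> ('k \<Rightarrow> real) \<Rightarrow> ('k \<Rightarrow> real) \<Rightarrow> 'k \<Rightarrow> real" where
  "vi_edl_partial lam beta alpha y i =
     (let S = \<Sum>k\<in>UNIV. alpha k; p = (\<lambda>k. alpha k / S);
          q = \<Sum>k\<in>UNIV. (p k)^2; w = \<Sum>k\<in>UNIV. y k * p k in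
       2 / S * (w + p i - q - y i)
     + (2 * (q - p i) / (S * (S + 1)) - (1 - q) / (S + 1)^2)
     + beta * ((alpha i - lam i) * Polygamma 1 (alpha i) - (S - (\<Sum>k\<in>UNIV. lam k)) * Polygamma 1 S))"

lemma has_real_derivative_vi_edl:
  fixes alpha lam y :: "'k::finite \<Rightarrow> real"
  assumes pos: "\<And>k. 0 < alpha k"
  shows "((\<lambda>t. vi_edl lam beta (alpha(i := t)) y) has_real_derivative vi_edl_partial lam beta alpha y i)
           (at (alpha i))"
proof -
  define S0 where "S0 = (\<Sum>k\<in>UNIV - {i}. alpha k)"
  define Y0 where "Y0 = (\<Sum>k\<in>UNIV - {i}. y k * alpha k)"
  define Q0 where "Q0 = (\<Sum>k\<in>UNIV - {i}. (alpha k)^2)"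
  define R0 where "R0 = (\<Sum>k\<in>UNIV - {i}. kl_component (lam k) (alpha k))"
  define L where "L = (\<Sum>k\<in>UNIV. lam k)"
  define m where "m = (\<lambda>t. - 2 * (y i * t + Y0) / (t + S0) + (t^2 + Q0) / (t + S0)^2
      + (1 - (t^2 + Q0) / (t + S0)^2) / (t + S0 + 1))"
  define g where "g = (\<lambda>t. kl_component (lam i) t + R0 - kl_component L (t + S0))"
  define a where "a = alpha i"
  define S where "S = a + S0"
  define Y where "Y = y i * a + Y0"
  define Q where "Q = a^2 + Q0"
  have "0 < a" "0 < S"
    using pos by (simp_all add: a_def S_def S0_def add_pos_nonneg less_imp_le sum_nonneg)
  have m: "(m has_real_derivative 2 / S * (Y / S + a / S - Q / S^2 - y i)
      + (2 * (Q / S^2 - a / S) / (S * (S + 1)) - (1 - Q / S^2) / (S + 1)^2)) (at a)"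
    unfolding m_def S_def Y_def Q_def using \<open>0 < S\<close>
    by (intro has_real_derivative_mse_term) (simp add: S_def)
  have g: "(g has_real_derivative (a - lam i) * Polygamma 1 a - (S - L) * Polygamma 1 S) (at a)"
    using \<open>0 < a\<close> \<open>0 < S\<close> unfolding g_def S_def
    by (auto intro!: derivative_eq_intros has_real_derivative_kl_component
        has_real_derivative_kl_component[THEN DERIV_chain2])
  have "((\<lambda>t. vi_edl lam beta (alpha(i := t)) y) has_real_derivative
      0 + (2 / S * (Y / S + a / S - Q / S^2 - y i)
      + (2 * (Q / S^2 - a / S) / (S * (S + 1)) - (1 - Q / S^2) / (S + 1)^2))
      + beta * ((a - lam i) * Polygamma 1 a - (S - L) * Polygamma 1 S)) (at a)"
    by (rule has_field_derivative_transform_within_open[where S = "{0<..}",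
          OF DERIV_add[OF DERIV_add[OF DERIV_const m] DERIV_cmult[OF g]]])
       (use \<open>0 < a\<close> pos in
         \<open>auto simp: vi_edl_fun_upd_eq less_imp_le m_def g_def S0_def Y0_def Q0_def R0_def L_def\<close>)
  moreover have "S = (\<Sum>k\<in>UNIV. alpha k)" "Y = (\<Sum>k\<in>UNIV. y k * alpha k)" "Q = (\<Sum>k\<in>UNIV. (alpha k)^2)"
    unfolding S_def Y_def Q_def S0_def Y0_def Q0_def a_def by (simp_all add: sum.remove[of UNIV i])
  ultimately show ?thesis
    by (simp add: vi_edl_partial_def Let_def a_def L_def power_divide sum_divide_distrib[symmetric]
        flip: sum_distrib_right)
qed

lemma abs_sq_error_gradient_le:
  fixes p y :: "'k::finite \<Rightarrow> real"
  assumes p_nonneg: "\<And>k. 0 \<le> p k" and p_sum: "(\<Sum>k\<in>UNIV. p k) = 1" and y: "y \<in> label_space"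
  shows "\<bar>(\<Sum>k\<in>UNIV. y k * p k) + p i - (\<Sum>k\<in>UNIV. (p k)^2) - y i\<bar> \<le> 2 * (1 - p i)"
proof -
  define r where "r = 1 - p i"
  define s where "s = 1 - y i"
  define A where "A = (\<Sum>k\<in>UNIV - {i}. y k * p k)"
  define B where "B = (\<Sum>k\<in>UNIV - {i}. (p k)^2)"
  have y_nonneg: "\<And>k. 0 \<le> y k" and y_sum: "(\<Sum>k\<in>UNIV. y k) = 1"
    using y by (auto simp: label_space_def)
  have r_eq: "r = (\<Sum>k\<in>UNIV - {i}. p k)" and s_eq: "s = (\<Sum>k\<in>UNIV - {i}. y k)"
    using p_sum y_sum by (simp_all add: r_def s_def sum.remove[of UNIV i])
  have "0 \<le> r" "0 \<le> s"
    unfolding r_eq s_eq using p_nonneg y_nonneg by (auto intro: sum_nonneg)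
  have "r \<le> 1" "s \<le> 1"
    using p_nonneg[of i] y_nonneg[of i] by (simp_all add: r_def s_def)
  have p_le_r: "p k \<le> r" if "k \<noteq> i" for k
    unfolding r_eq using that p_nonneg by (intro member_le_sum) auto
  have "A \<le> (\<Sum>k\<in>UNIV - {i}. y k * r)"
    unfolding A_def using p_le_r y_nonneg by (intro sum_mono mult_left_mono) auto
  then have "A \<le> s * r"
    by (simp add: s_eq sum_distrib_right)
  have "B \<le> (\<Sum>k\<in>UNIV - {i}. p k * r)"
    unfolding B_def power2_eq_square using p_le_r p_nonneg by (intro sum_mono mult_left_mono) auto
  then have "B \<le> r * r"
    by (simp add: r_eq sum_distrib_right)
  have "0 \<le> A" "0 \<le> B"
    unfolding A_def B_def using p_nonneg y_nonneg by (auto intro: sum_nonneg)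
  have "(\<Sum>k\<in>UNIV. y k * p k) + p i - (\<Sum>k\<in>UNIV. (p k)^2) - y i = r * s - r * r + A - B"
    by (simp add: A_def B_def r_def s_def sum.remove[of UNIV i] algebra_simps power2_eq_square)
  moreover have "r * s \<le> r" "r * r \<le> r" "0 \<le> r * s"
    using \<open>0 \<le> r\<close> \<open>r \<le> 1\<close> \<open>0 \<le> s\<close> \<open>s \<le> 1\<close> by (simp_all add: mult_left_le)
  ultimately show ?thesis
    using \<open>A \<le> s * r\<close> \<open>B \<le> r * r\<close> \<open>0 \<le> A\<close> \<open>0 \<le> B\<close> unfolding r_def[symmetric]
    by (simp add: abs_le_iff mult.commute[of s r])
qed

lemma abs_variance_gradient_le:
  fixes p q S K :: real
  assumes "0 \<le> p" "p \<le> 1" "0 \<le> q" "q \<le> 1" "0 < K" "K \<le> S"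
  shows "\<bar>2 * (q - p) / (S * (S + 1)) - (1 - q) / (S + 1)^2\<bar> \<le> 2 / (K * (K + 1)) + 1 / (K + 1)^2"
proof -
  have "\<bar>2 * (q - p) / (S * (S + 1))\<bar> \<le> 2 / (S * (S + 1))"
    using assms by (auto simp: abs_divide intro!: divide_right_mono)
  also have "\<dots> \<le> 2 / (K * (K + 1))"
    using assms by (intro divide_left_mono mult_mono) auto
  finally have first: "\<bar>2 * (q - p) / (S * (S + 1))\<bar> \<le> 2 / (K * (K + 1))" .
  have "\<bar>(1 - q) / (S + 1)^2\<bar> \<le> 1 / (S + 1)^2"
    using assms by (simp add: divide_le_cancel)
  also have "\<dots> \<le> 1 / (K + 1)^2"
    using assms by (intro divide_left_mono power_mono) auto
  finally show ?thesis
    using first by linarith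
qed

lemma abs_sq_error_partial_le:
  fixes alpha y :: "'k::finite \<Rightarrow> real"
  assumes alpha_ge: "\<And>k. 1 \<le> alpha k" and y: "y \<in> label_space"
  defines "S \<equiv> \<Sum>k\<in>UNIV. alpha k"
  defines "p \<equiv> \<lambda>k. alpha k / S"
  shows "\<bar>2 / S * ((\<Sum>k\<in>UNIV. y k * p k) + p i - (\<Sum>k\<in>UNIV. (p k)^2) - y i)\<bar> \<le> 2"
proof -
  have "1 \<le> S"
    using member_le_sum[of i UNIV alpha] alpha_ge alpha_ge[of i]
    by (simp add: S_def) (meson order.trans zero_le_one)
  have p_nonneg: "\<And>k. 0 \<le> p k"
    using alpha_ge \<open>1 \<le> S\<close> by (simp add: p_def order.trans[OF zero_le_one])
  have p_sum: "(\<Sum>k\<in>UNIV. p k) = 1"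
    using \<open>1 \<le> S\<close> by (simp add: p_def S_def flip: sum_divide_distrib)
  have "2 * S - 2 \<le> S * S"
    using zero_le_power2[of "S - 1"] by (simp add: power2_eq_square algebra_simps)
  then have "(2 * S - 2) / S \<le> S"
    using \<open>1 \<le> S\<close> by (simp add: pos_divide_le_eq)
  moreover have "2 * (1 - p i) \<le> (2 * S - 2) / S"
    using alpha_ge[of i] \<open>1 \<le> S\<close> by (simp add: p_def field_simps)
  ultimately have "2 * (1 - p i) \<le> S"
    by linarith
  then show ?thesis
    using abs_sq_error_gradient_le[OF p_nonneg p_sum y, of i] \<open>1 \<le> S\<close>
    by (simp add: abs_mult pos_divide_le_eq)
qed

lemma abs_vi_edl_partial_le:
  fixes alpha lam y :: "'k::finite \<Rightarrow> real"
  assumes alpha_ge: "\<And>k. 1 \<le> alpha k" and lam_nonneg: "\<And>k. 0 \<le> lam k"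
    and lam_le: "\<And>k. lam k \<le> alpha k" and "0 \<le> beta" and y: "y \<in> label_space"
  defines "K \<equiv> real CARD('k)"
  shows "\<bar>vi_edl_partial lam beta alpha y i\<bar> \<le> 2 + 1 / (K + 1)^2 + 2 / (K * (K + 1)) + 2 * beta"
proof -
  define S where "S = (\<Sum>k\<in>UNIV. alpha k)"
  define p where "p = (\<lambda>k. alpha k / S)"
  define q where "q = (\<Sum>k\<in>UNIV. (p k)^2)"
  define w where "w = (\<Sum>k\<in>UNIV. y k * p k)"
  define L where "L = (\<Sum>k\<in>UNIV. lam k)"
  have "K \<le> S"
    using sum_mono[of UNIV "\<lambda>_. 1" alpha] alpha_ge by (simp add: K_def S_def)
  have "1 \<le> K"
    using zero_less_card_finite[where 'a='k] by (simp add: K_def Suc_le_eq)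
  then have "0 < K" "0 < S" "1 \<le> S"
    using \<open>K \<le> S\<close> by simp_all
  have p_nonneg: "0 \<le> p k" and p_le_1: "p k \<le> 1" for k
    using alpha_ge[of k] member_le_sum[of k UNIV alpha] \<open>0 < S\<close>
    by (simp_all add: p_def S_def order.trans[OF zero_le_one] alpha_ge sum_nonneg)
  have "(\<Sum>k\<in>UNIV. p k) = 1"
    using \<open>0 < S\<close> by (simp add: p_def S_def flip: sum_divide_distrib)
  then have "0 \<le> q" "q \<le> 1"
    using sum_mono[of UNIV "\<lambda>k. (p k)^2" p] p_nonneg p_le_1
    by (auto simp: q_def power2_eq_square mult_left_le intro: sum_nonneg)
  have sq_error: "\<bar>2 / S * (w + p i - q - y i)\<bar> \<le> 2"
    using abs_sq_error_partial_le[OF alpha_ge y, where i = i] by (simp add: S_def p_def q_def w_def)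
  have variance: "\<bar>2 * (q - p i) / (S * (S + 1)) - (1 - q) / (S + 1)^2\<bar>
      \<le> 2 / (K * (K + 1)) + 1 / (K + 1)^2"
    using abs_variance_gradient_le p_nonneg p_le_1 \<open>0 \<le> q\<close> \<open>q \<le> 1\<close> \<open>0 < K\<close> \<open>K \<le> S\<close> by blast
  have "L \<le> S" "0 \<le> L"
    using lam_le lam_nonneg by (auto simp: L_def S_def intro: sum_mono sum_nonneg)
  then have kl:
      "\<bar>beta * ((alpha i - lam i) * Polygamma 1 (alpha i) - (S - L) * Polygamma 1 S)\<bar> \<le> 2 * beta"
    using kl_component_derivative_bounds[of "alpha i" "lam i"] kl_component_derivative_bounds[of S L]
      alpha_ge lam_nonneg lam_le \<open>1 \<le> S\<close> \<open>0 \<le> beta\<close>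
    by (simp add: abs_mult abs_le_iff mult.commute[of _ beta] mult_left_mono)
  have "vi_edl_partial lam beta alpha y i = 2 / S * (w + p i - q - y i)
      + (2 * (q - p i) / (S * (S + 1)) - (1 - q) / (S + 1)^2)
      + beta * ((alpha i - lam i) * Polygamma 1 (alpha i) - (S - L) * Polygamma 1 S)"
    by (simp only: vi_edl_partial_def Let_def S_def p_def q_def w_def L_def)
  then show ?thesis
    using sq_error variance kl by linarith
qed

lemma partial_derivatives_bound:
  fixes F :: "('k::finite \<Rightarrow> real) \<Rightarrow> real" and X :: "'k \<Rightarrow> real set"
  assumes convex: "\<And>k. convex (X k)"
    and deriv: "\<And>x i. (\<And>k. x k \<in> X k) \<Longrightarrow> ((\<lambda>t. F (x(i := t))) has_real_derivative F' x i) (at (x i))"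
    and bound: "\<And>x i. (\<And>k. x k \<in> X k) \<Longrightarrow> \<bar>F' x i\<bar> \<le> B"
    and x: "\<And>k. x k \<in> X k" and x': "\<And>k. x' k \<in> X k"
  shows "\<bar>F x - F x'\<bar> \<le> B * (\<Sum>k\<in>UNIV. \<bar>x k - x' k\<bar>)"
proof -
  define mix where "mix A = (\<lambda>k. if k \<in> A then x' k else x k)" for A
  have mix_in: "mix A k \<in> X k" for A k
    using x x' by (simp add: mix_def)
  have "\<bar>F x - F (mix A)\<bar> \<le> B * (\<Sum>k\<in>A. \<bar>x k - x' k\<bar>)" if "finite A" for A
    using that
  proof (induction A rule: finite_induct)
    case empty
    then show ?case
      by (simp add: mix_def)
  next
    case (insert j A)
    define f where "f = (\<lambda>t. F ((mix A)(j := t)))"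
    have "(f has_real_derivative F' ((mix A)(j := t)) j) (at t within X j)" if "t \<in> X j" for t
    proof -
      have "((mix A)(j := t)) k \<in> X k" for k
        using mix_in that by simp
      then show ?thesis
        using deriv[of "(mix A)(j := t)" j] by (simp add: f_def has_field_derivative_at_within)
    qed
    moreover have "\<bar>F' ((mix A)(j := t)) j\<bar> \<le> B" if "t \<in> X j" for t
      using bound mix_in that by simp
    ultimately have "\<bar>f (x j) - f (x' j)\<bar> \<le> B * \<bar>x j - x' j\<bar>"
      using field_differentiable_bound[OF convex, of j f "\<lambda>t. F' ((mix A)(j := t)) j" B "x j" "x' j"]
        x x'
      by simp
    moreover have "f (x j) = F (mix A)" "f (x' j) = F (mix (insert j A))"
      using insert.hyps by (auto simp: f_def mix_def intro!: arg_cong[where f = F])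
    ultimately show ?case
      using insert by (simp add: algebra_simps)
  qed
  moreover have "mix UNIV = x'"
    by (simp add: mix_def)
  ultimately show ?thesis
    by (metis finite)
qed

theorem theoremB1:
  fixes lam :: "'k::finite \<Rightarrow> real" and beta :: real
  assumes lam_ge: "\<forall>k. lam k \<ge> 1"
    and beta_pos: "beta > 0"
  defines "B \<equiv> 2 + 1 / (real CARD('k) + 1)^2 + 2 / (real CARD('k) * (real CARD('k) + 1))
                 + beta * (2 + 1 / Min (range lam) + 1 / (\<Sum>k\<in>UNIV. lam k))"
  shows "(\<forall>e y i. (\<forall>k. e k \<ge> 0) \<longrightarrow> y \<in> label_space \<longrightarrow>
            (\<exists>D. ((\<lambda>t. vi_edl lam beta ((\<lambda>k. e k + lam k)(i := t)) y)
                     has_real_derivative D) (at (e i + lam i)) \<and> \<bar>D\<bar> \<le> B))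
       \<and> (\<forall>e e' y. (\<forall>k. e k \<ge> 0) \<longrightarrow> (\<forall>k. e' k \<ge> 0) \<longrightarrow> y \<in> label_space \<longrightarrow>
            \<bar>vi_edl lam beta (\<lambda>k. e k + lam k) y - vi_edl lam beta (\<lambda>k. e' k + lam k) y\<bar>
              \<le> B * (\<Sum>k\<in>UNIV. \<bar>e k - e' k\<bar>))"
proof -
  have lam_nonneg: "\<And>k. 0 \<le> lam k"
    using lam_ge by (auto intro: order.trans[OF zero_le_one])
  have "1 \<le> Min (range lam)"
    using lam_ge by (auto intro!: Min.boundedI)
  then have "0 \<le> beta * (1 / Min (range lam) + 1 / (\<Sum>k\<in>UNIV. lam k))"
    using beta_pos lam_nonneg by (intro mult_nonneg_nonneg add_nonneg_nonneg) (auto intro: sum_nonneg)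
  then have slack:
      "2 + 1 / (real CARD('k) + 1)^2 + 2 / (real CARD('k) * (real CARD('k) + 1)) + 2 * beta \<le> B"
    unfolding B_def by (simp add: algebra_simps)
  have alpha_ge: "1 \<le> alpha k" if "\<And>k. alpha k \<in> {lam k..}" for alpha k
    using that[of k] lam_ge by (auto intro: order.trans)
  have deriv: "((\<lambda>t. vi_edl lam beta (alpha(i := t)) y)
      has_real_derivative vi_edl_partial lam beta alpha y i) (at (alpha i))"
    if "\<And>k. alpha k \<in> {lam k..}" for alpha y i
    using alpha_ge[OF that] by (intro has_real_derivative_vi_edl) (meson less_le_trans zero_less_one)
  have bound: "\<bar>vi_edl_partial lam beta alpha y i\<bar> \<le> B"
    if "\<And>k. alpha k \<in> {lam k..}" and "y \<in> label_space" for alpha y i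
    using that alpha_ge[OF that(1)] lam_nonneg beta_pos
    by (intro order.trans[OF abs_vi_edl_partial_le slack]) auto
  show ?thesis
  proof (intro conjI allI impI)
    fix e y :: "'k \<Rightarrow> real" and i :: 'k
    assume e: "\<forall>k. 0 \<le> e k" and y: "y \<in> label_space"
    have alpha: "e k + lam k \<in> {lam k..}" for k
      using e by simp
    show "\<exists>D. ((\<lambda>t. vi_edl lam beta ((\<lambda>k. e k + lam k)(i := t)) y) has_real_derivative D)
        (at (e i + lam i)) \<and> \<bar>D\<bar> \<le> B"
      using deriv[OF alpha] bound[OF alpha y] by blast
  next
    fix e e' y :: "'k \<Rightarrow> real"
    assume "\<forall>k. 0 \<le> e k" "\<forall>k. 0 \<le> e' k" and y: "y \<in> label_space"
    then have "\<bar>vi_edl lam beta (\<lambda>k. e k + lam k) y - vi_edl lam beta (\<lambda>k. e' k + lam k) y\<bar>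
        \<le> B * (\<Sum>k\<in>UNIV. \<bar>(e k + lam k) - (e' k + lam k)\<bar>)"
      by (intro partial_derivatives_bound[where X = "\<lambda>k. {lam k..}"
            and F = "\<lambda>alpha. vi_edl lam beta alpha y"
            and F' = "\<lambda>alpha i. vi_edl_partial lam beta alpha y i"] deriv bound[OF _ y])
         (auto simp: convex_real_interval)
    then show "\<bar>vi_edl lam beta (\<lambda>k. e k + lam k) y - vi_edl lam beta (\<lambda>k. e' k + lam k) y\<bar>
        \<le> B * (\<Sum>k\<in>UNIV. \<bar>e k - e' k\<bar>)"
      by simp
  qed
qed

end
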